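(* Let $E$ be a real Banach space and let $\mathcal F\subseteq H[E]_+$ be upwards directed and pointwise bounded. Define $g:E^*\to\mathbb R_+$ by $g(x^* )=\sup\{f(x^* ):f\in\mathcal F\}$. Then $g\in H[E]_+$ and $\|g\|_{FBL[E]}=\sup\{\|f\|_{FBL[E]}:f\in\mathcal F\}$ (both sides possibly infinite).
   Context: For a real Banach space $E$ with dual $E^*$ and closed unit ball $B_E$, let $H[E]$ be the vector space of all positively homogeneous functions $f:E^*\to\mathbb R$ ($f(\lambda x^* )=\lambda f(x^* )$ for $\lambda>0$), ordered pointwise; $H[E]_+$ denotes its nonnegative elements. For $f\in H[E]$ put $\|f\|_{FBL[E]}:=\sup\{\sum_{k=1}^n|f(x_k^* )| : n\in\mathbb N,\ x_1^*,\dots,x_n^*\in E^*,\ \sup_{x\in B_E}\sum_{k=1}^n|x_k^*(x)|\le 1\}\in[0,\infty]$. *)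

theory Defs
  imports "HOL-Analysis.Analysis"
begin

text \<open>The dual space E* is modelled by the type of bounded linear functionals
  (blinfun type). H[E]: positively homogeneous real functions on E*.\<close>

definition pos_homog :: "(('a::real_normed_vector \<Rightarrow>\<^sub>L real) \<Rightarrow> real) \<Rightarrow> bool" where
  "pos_homog f \<longleftrightarrow> (\<forall>r::real. \<forall>x. r > 0 \<longrightarrow> f (r *\<^sub>R x) = r * f x)"

definition H_plus :: "(('a::real_normed_vector \<Rightarrow>\<^sub>L real) \<Rightarrow> real) set" where
  "H_plus = {f. pos_homog f \<and> (\<forall>x. 0 \<le> f x)}"

definition fbl_norm :: "(('a::real_normed_vector \<Rightarrow>\<^sub>L real) \<Rightarrow> real) \<Rightarrow> ereal" where
  "fbl_norm f = (SUP xs \<in> {xs :: ('a \<Rightarrow>\<^sub>L real) list. xs \<noteq> [] \<and>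
       (\<forall>x. norm x \<le> 1 \<longrightarrow> (\<Sum>xk\<leftarrow>xs. \<bar>blinfun_apply xk x\<bar>) \<le> 1)}.
       ereal (\<Sum>xk\<leftarrow>xs. \<bar>f xk\<bar>))"

end

theory Submission
  imports Defs
begin

text \<open>Homogeneity and positivity pass to pointwise suprema, and monotone continuous maps such as
  \<open>(*) r\<close> and \<open>ereal\<close> commute with them. Finite sums commute with suprema of an upwards directed
  family, because finitely many points are approximated simultaneously by one member of the
  family. Hence both sides of the norm identity are the same double supremum, over test lists
  and over members of the family, taken in the two possible orders.\<close>

lemma mono_cont_cSUP:
  fixes \<phi> :: "'b::{linorder_topology,conditionally_complete_linorder} \<Rightarrow>
    'c::{linorder_topology,conditionally_complete_linorder}"
  assumes "mono \<phi>" "continuous_on UNIV \<phi>" "A \<noteq> {}" "bdd_above (f ` A)"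
  shows "\<phi> (SUP a\<in>A. f a) = (SUP a\<in>A. \<phi> (f a))"
  using continuous_at_Sup_mono[of \<phi> "f ` A"] assms
  by (simp add: image_comp continuous_on_eq_continuous_within continuous_at_imp_continuous_at_within)

lemma pos_homog_cSUP:
  fixes \<F> :: "(('a::real_normed_vector \<Rightarrow>\<^sub>L real) \<Rightarrow> real) set"
  assumes "\<F> \<noteq> {}" "\<forall>f\<in>\<F>. pos_homog f" "\<forall>x. bdd_above ((\<lambda>f. f x) ` \<F>)"
  shows "pos_homog (\<lambda>x. SUP f\<in>\<F>. f x)"
  unfolding pos_homog_def
proof (intro allI impI)
  fix r :: real and x assume "r > 0"
  have "(SUP f\<in>\<F>. f (r *\<^sub>R x)) = (SUP f\<in>\<F>. r * f x)"
    using assms(2) \<open>r > 0\<close> by (simp add: pos_homog_def)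
  also have "\<dots> = r * (SUP f\<in>\<F>. f x)"
    using \<open>r > 0\<close> assms(1,3)
    by (intro mono_cont_cSUP[symmetric]) (auto simp: mono_def intro!: continuous_intros)
  finally show "(SUP f\<in>\<F>. f (r *\<^sub>R x)) = r * (SUP f\<in>\<F>. f x)" .
qed

lemma H_plus_cSUP:
  fixes \<F> :: "(('a::real_normed_vector \<Rightarrow>\<^sub>L real) \<Rightarrow> real) set"
  assumes "\<F> \<subseteq> H_plus" "\<F> \<noteq> {}" "\<forall>x. bdd_above ((\<lambda>f. f x) ` \<F>)"
  shows "(\<lambda>x. SUP f\<in>\<F>. f x) \<in> H_plus"
proof -
  obtain f where f: "f \<in> \<F>" using assms(2) by blast
  have "0 \<le> f x" "f x \<le> (SUP f\<in>\<F>. f x)" for x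
    using f assms(1,3) by (auto simp: H_plus_def intro: cSUP_upper)
  then have "0 \<le> (SUP f\<in>\<F>. f x)" for x by (meson order_trans)
  moreover have "pos_homog (\<lambda>x. SUP f\<in>\<F>. f x)"
    using assms by (intro pos_homog_cSUP) (auto simp: H_plus_def)
  ultimately show ?thesis by (simp add: H_plus_def)
qed

lemma directed_approx_cSUP_list:
  fixes \<F> :: "('b \<Rightarrow> real) set"
  assumes "\<F> \<noteq> {}" "\<forall>f\<in>\<F>. \<forall>h\<in>\<F>. \<exists>k\<in>\<F>. f \<le> k \<and> h \<le> k"
    and "\<forall>x. bdd_above ((\<lambda>f. f x) ` \<F>)" "e > 0"
  shows "\<exists>k\<in>\<F>. \<forall>x\<in>set xs. (SUP f\<in>\<F>. f x) - e < k x"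
proof (induction xs)
  case Nil
  then show ?case using assms(1) by auto
next
  case (Cons a xs)
  then obtain f where f: "f \<in> \<F>" "\<forall>x\<in>set xs. (SUP f\<in>\<F>. f x) - e < f x" by blast
  have "(SUP f\<in>\<F>. f a) - e < (SUP f\<in>\<F>. f a)" using \<open>e > 0\<close> by simp
  then obtain h where h: "h \<in> \<F>" "(SUP f\<in>\<F>. f a) - e < h a"
    using less_cSUP_iff[OF assms(1) assms(3)[rule_format, of a]] by blast
  obtain k where k: "k \<in> \<F>" "f \<le> k" "h \<le> k" using assms(2) f h by blast
  have "(SUP f\<in>\<F>. f x) - e < k x" if "x \<in> set (a # xs)" for x
    using that f(2) h(2) k(2,3) by (auto simp: le_fun_def intro: less_le_trans)
  with k(1) show ?case by blast
qed

lemma bdd_above_sum_list: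
  fixes \<F> :: "('b \<Rightarrow> real) set"
  assumes "\<forall>x. bdd_above ((\<lambda>f. f x) ` \<F>)"
  shows "bdd_above ((\<lambda>f. \<Sum>x\<leftarrow>xs. f x) ` \<F>)"
proof (rule bdd_aboveI2)
  fix f assume "f \<in> \<F>"
  then show "(\<Sum>x\<leftarrow>xs. f x) \<le> (\<Sum>x\<leftarrow>xs. SUP f\<in>\<F>. f x)"
    using assms by (intro sum_list_mono cSUP_upper) auto
qed

lemma sum_list_cSUP_directed:
  fixes \<F> :: "('b \<Rightarrow> real) set"
  assumes "\<F> \<noteq> {}" "\<forall>f\<in>\<F>. \<forall>h\<in>\<F>. \<exists>k\<in>\<F>. f \<le> k \<and> h \<le> k"
    and "\<forall>x. bdd_above ((\<lambda>f. f x) ` \<F>)"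
  shows "(\<Sum>x\<leftarrow>xs. SUP f\<in>\<F>. f x) = (SUP f\<in>\<F>. \<Sum>x\<leftarrow>xs. f x)"
proof -
  have sum_le: "(\<Sum>x\<leftarrow>xs. f x) \<le> (\<Sum>x\<leftarrow>xs. SUP f\<in>\<F>. f x)" if "f \<in> \<F>" for f
    using that assms(3) by (intro sum_list_mono cSUP_upper) auto
  show ?thesis
  proof (rule antisym)
    show "(\<Sum>x\<leftarrow>xs. SUP f\<in>\<F>. f x) \<le> (SUP f\<in>\<F>. \<Sum>x\<leftarrow>xs. f x)"
    proof (rule field_le_epsilon)
      fix d :: real assume "d > 0"
      define e where "e = d / (length xs + 1)"
      have "e > 0" using \<open>d > 0\<close> by (simp add: e_def)
      then obtain k where k: "k \<in> \<F>" "\<forall>x\<in>set xs. (SUP f\<in>\<F>. f x) - e < k x"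
        using directed_approx_cSUP_list[OF assms] by blast
      have "(\<Sum>x\<leftarrow>xs. SUP f\<in>\<F>. f x) - length xs * e = (\<Sum>x\<leftarrow>xs. (SUP f\<in>\<F>. f x) - e)"
        by (simp add: sum_list_subtractf sum_list_triv)
      also have "\<dots> \<le> (\<Sum>x\<leftarrow>xs. k x)"
        using k(2) by (intro sum_list_mono) (simp add: less_imp_le)
      also have "\<dots> \<le> (SUP f\<in>\<F>. \<Sum>x\<leftarrow>xs. f x)"
        using k(1) bdd_above_sum_list[OF assms(3)] by (rule cSUP_upper)
      finally have "(\<Sum>x\<leftarrow>xs. SUP f\<in>\<F>. f x) \<le> (SUP f\<in>\<F>. \<Sum>x\<leftarrow>xs. f x) + length xs * e"
        by simp
      moreover have "length xs * e \<le> d"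
        using \<open>d > 0\<close> by (simp add: e_def field_simps)
      ultimately show "(\<Sum>x\<leftarrow>xs. SUP f\<in>\<F>. f x) \<le> (SUP f\<in>\<F>. \<Sum>x\<leftarrow>xs. f x) + d"
        by linarith
    qed
    show "(SUP f\<in>\<F>. \<Sum>x\<leftarrow>xs. f x) \<le> (\<Sum>x\<leftarrow>xs. SUP f\<in>\<F>. f x)"
      using sum_le assms(1) by (rule cSUP_least[rotated])
  qed
qed

definition fbl_test_lists :: "('a::real_normed_vector \<Rightarrow>\<^sub>L real) list set" where
  "fbl_test_lists = {xs. xs \<noteq> [] \<and> (\<forall>x. norm x \<le> 1 \<longrightarrow> (\<Sum>xk\<leftarrow>xs. \<bar>blinfun_apply xk x\<bar>) \<le> 1)}"

lemma fbl_norm_nonneg_eq: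
  assumes "\<forall>x. 0 \<le> f x"
  shows "fbl_norm f = (SUP xs\<in>fbl_test_lists. ereal (\<Sum>xk\<leftarrow>xs. f xk))"
  using assms unfolding fbl_norm_def fbl_test_lists_def by simp

theorem lemma4p2:
  fixes \<F> :: "(('a::banach \<Rightarrow>\<^sub>L real) \<Rightarrow> real) set"
  assumes sub: "\<F> \<subseteq> H_plus"
    and nonempty: "\<F> \<noteq> {}"
    and directed: "\<forall>f\<in>\<F>. \<forall>h\<in>\<F>. \<exists>k\<in>\<F>. f \<le> k \<and> h \<le> k"
    and bounded: "\<forall>x. bdd_above ((\<lambda>f. f x) ` \<F>)"
  defines "g \<equiv> (\<lambda>x. SUP f\<in>\<F>. f x)"
  shows "g \<in> H_plus \<and> fbl_norm g = (SUP f\<in>\<F>. fbl_norm f)"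
proof
  show gH: "g \<in> H_plus"
    unfolding g_def using sub nonempty bounded by (rule H_plus_cSUP)
  have nonneg: "\<forall>x. 0 \<le> f x" if "f \<in> insert g \<F>" for f
    using that gH sub by (auto simp: H_plus_def)
  have "fbl_norm g = (SUP xs\<in>fbl_test_lists. ereal (SUP f\<in>\<F>. \<Sum>xk\<leftarrow>xs. f xk))"
    using nonneg[of g] sum_list_cSUP_directed[OF nonempty directed bounded]
    by (simp add: fbl_norm_nonneg_eq g_def)
  also have "\<dots> = (SUP xs\<in>fbl_test_lists. SUP f\<in>\<F>. ereal (\<Sum>xk\<leftarrow>xs. f xk))"
    using nonempty bdd_above_sum_list[OF bounded]
    by (intro SUP_cong mono_cont_cSUP) (auto simp: mono_def continuous_on_ereal continuous_on_id)
  also have "\<dots> = (SUP f\<in>\<F>. fbl_norm f)"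
    using nonneg by (subst SUP_commute) (simp add: fbl_norm_nonneg_eq)
  finally show "fbl_norm g = (SUP f\<in>\<F>. fbl_norm f)" .
qed

end
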